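(* Let $\mathcal G=(G,\pi_G,c_G)$ and $\mathcal H=(H,\pi_H,c_H)$ be in $\mathrm{LiftPMod}(\mathbb B,\mathcal C)$, and let $\varphi:\mathcal G\to\mathcal H$ be a morphism of lifted perceptrons. Then for all $w_G\in\mathrm{Param}(\mathcal G)$ and $w_H\in\mathrm{Param}(\mathcal H)$, if $w_G=\varphi^*w_H$ (i.e. $(w_G)_e=(w_H)_{\varphi(e)}$ for all $e\in E_G$), then $\mathcal F_{\mathcal G}(w_G,\cdot)=\varphi^*\circ\mathcal F_{\mathcal H}(w_H,\cdot)$, i.e. $[\mathcal F_{\mathcal G}(w_G,x)]_v=[\mathcal F_{\mathcal H}(w_H,x)]_{\varphi(v)}$ for every input $x\in\prod_{u\in\mathcal C}\mathcal Y_{p_{\mathcal C}(u)}$ and every $v\in V_G$.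
   Context: Graphs: $G=(V,E)$, $V$ finite, $E\subseteq V\times V$; $G(-,v)=\{u:(u,v)\in E\}$. A homomorphism $\varphi:G\to H$ maps vertices with $(u,v)\in E_G\Rightarrow(\varphi(u),\varphi(v))\in E_H$, and acts on edges by $\varphi(u,v)=(\varphi(u),\varphi(v))$. A fibration is a homomorphism such that for each $v\in V_G$ the restriction $G(-,v)\to H(-,\varphi(v))$ is a bijection. A Euclidean bundle over a finite set is a family of finite-dimensional real inner product spaces indexed by it. A perceptron module over a finite DAG $B=(V_B,E_B)$ is $\mathbb B=((I_B,T_B),(\mathcal Y,\mathcal Z,\mathcal W),(M,\sigma))$: $I_B\subseteq V_B$ (vertices without parents), $T_B\subseteq V_B$, bundles $\mathcal Y$ over $V_B$, $\mathcal Z,\mathcal W$ over $E_B$, maps $M_{(u,v)}:\mathcal W_{(u,v)}\times\mathcal Y_u\to\mathcal Z_{(u,v)}$ and $\sigma_v:\prod_{u\in B(-,v)}\mathcal Z_{(u,v)}\to\mathcal Y_v$ for $v\notin I_B$. Fix such $\mathbb B$, a finite set $\mathcal C$ and $p_{\mathcal C}:\mathcal C\to I_B$. $\mathrm{LiftPMod}(\mathbb B,\mathcal C)$: triples $(G,\pi,c)$ with $G=(V_G,E_G)$ a graph, $\pi:G\to B$ a homomorphism, $c:\pi^{-1}(I_B)\to\mathcal C$ injective with $p_{\mathcal C}\circ c=\pi$ on $\pi^{-1}(I_B)$. $\mathrm{Param}(\mathcal G)=\prod_{e\in E_G}\mathcal W_{\pi(e)}$. Forward function: $\mathcal F_{\mathcal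 G}(w,x)=f\in\prod_{v\in V_G}\mathcal Y_{\pi(v)}$ with $f_v=x_{c(v)}$ if $\pi(v)\in I_B$, and otherwise $f_v=\sigma_{\pi(v)}((\sum_{u\in G(-,v)\cap\pi^{-1}(a)}M_{\pi(u,v)}(w_{(u,v)},f_u))_{a\in B(-,\pi(v))})$, defined inductively (G is acyclic). A morphism of lifted perceptrons $\varphi:(G,\pi_G,c_G)\to(H,\pi_H,c_H)$ is a fibration $\varphi:G\to H$ with $\pi_G=\pi_H\circ\varphi$ and $c_G=c_H\circ\varphi$ (on input vertices). *)

theory Defs
  imports "HOL-Analysis.Analysis"
begin

definition is_graph :: "'a set \<Rightarrow> ('a \<times> 'a) set \<Rightarrow> bool" where
  "is_graph V E \<longleftrightarrow> finite V \<and> E \<subseteq> V \<times> V"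

definition parents :: "('a \<times> 'a) set \<Rightarrow> 'a \<Rightarrow> 'a set" where
  "parents E v = {u. (u, v) \<in> E}"

definition is_dag :: "'a set \<Rightarrow> ('a \<times> 'a) set \<Rightarrow> bool" where
  "is_dag V E \<longleftrightarrow> is_graph V E \<and> acyclic E"

definition graph_hom ::
  "'a set \<Rightarrow> ('a \<times> 'a) set \<Rightarrow> 'b set \<Rightarrow> ('b \<times> 'b) set \<Rightarrow> ('a \<Rightarrow> 'b) \<Rightarrow> bool" where
  "graph_hom VG EG VH EH \<phi> \<longleftrightarrow>
     (\<forall>v\<in>VG. \<phi> v \<in> VH) \<and> (\<forall>u v. (u, v) \<in> EG \<longrightarrow> (\<phi> u, \<phi> v) \<in> EH)"

definition fibration ::
  "'a set \<Rightarrow> ('a \<times> 'a) set \<Rightarrow> 'b set \<Rightarrow> ('b \<times> 'b) set \<Rightarrow> ('a \<Rightarrow> 'b) \<Rightarrow> bool" where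
  "fibration VG EG VH EH \<phi> \<longleftrightarrow> graph_hom VG EG VH EH \<phi> \<and>
     (\<forall>v\<in>VG. bij_betw \<phi> (parents EG v) (parents EH (\<phi> v)))"

(* Each fibre of a Euclidean bundle is
   modelled as a linear subspace of a fixed Euclidean space (so it is a
   finite-dimensional real inner product space).  The product
   \<Prod>_{u \<in> B(-,v)} Z_(u,v) is modelled by functions 'b \<Rightarrow> 'z whose value at each
   parent a of v lies in Z_(a,v) (values at non-parents are irrelevant). *)
record ('b, 'y, 'z, 'w) pmod =
  VB :: "'b set"
  EB :: "('b \<times> 'b) set"
  IB :: "'b set"
  TB :: "'b set"
  Yb :: "'b \<Rightarrow> 'y set"
  Zb :: "'b \<times> 'b \<Rightarrow> 'z set"
  Wb :: "'b \<times> 'b \<Rightarrow> 'w set"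
  Mb :: "'b \<times> 'b \<Rightarrow> 'w \<Rightarrow> 'y \<Rightarrow> 'z"
  sig :: "'b \<Rightarrow> ('b \<Rightarrow> 'z) \<Rightarrow> 'y"

definition perceptron_module ::
  "('b, 'y::euclidean_space, 'z::euclidean_space, 'w::euclidean_space) pmod \<Rightarrow> bool" where
  "perceptron_module B \<longleftrightarrow>
     is_dag (VB B) (EB B) \<and>
     IB B \<subseteq> VB B \<and> (\<forall>v\<in>IB B. parents (EB B) v = {}) \<and>
     TB B \<subseteq> VB B \<and>
     (\<forall>v\<in>VB B. subspace (Yb B v)) \<and>
     (\<forall>e\<in>EB B. subspace (Zb B e) \<and> subspace (Wb B e)) \<and>
     (\<forall>u v. (u, v) \<in> EB B \<longrightarrow>
        (\<forall>w y. w \<in> Wb B (u, v) \<longrightarrow> y \<in> Yb B u \<longrightarrow> Mb B (u, v) w y \<in> Zb B (u, v))) \<and>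
     (\<forall>v\<in>VB B - IB B. \<forall>g. (\<forall>a\<in>parents (EB B) v. g a \<in> Zb B (a, v))
        \<longrightarrow> sig B v g \<in> Yb B v)"

definition lift_pmod ::
  "('b, 'y, 'z, 'w) pmod \<Rightarrow> 'c set \<Rightarrow> ('c \<Rightarrow> 'b) \<Rightarrow>
   'g set \<Rightarrow> ('g \<times> 'g) set \<Rightarrow> ('g \<Rightarrow> 'b) \<Rightarrow> ('g \<Rightarrow> 'c) \<Rightarrow> bool" where
  "lift_pmod B C p V E \<pi> c \<longleftrightarrow>
     is_graph V E \<and> graph_hom V E (VB B) (EB B) \<pi> \<and>
     (\<forall>v\<in>V. \<pi> v \<in> IB B \<longrightarrow> c v \<in> C \<and> p (c v) = \<pi> v) \<and>
     inj_on c {v\<in>V. \<pi> v \<in> IB B}"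

definition param ::
  "('b, 'y, 'z, 'w) pmod \<Rightarrow> ('g \<times> 'g) set \<Rightarrow> ('g \<Rightarrow> 'b) \<Rightarrow> ('g \<times> 'g \<Rightarrow> 'w) set" where
  "param B E \<pi> = {w. \<forall>u v. (u, v) \<in> E \<longrightarrow> w (u, v) \<in> Wb B (\<pi> u, \<pi> v)}"

(* Forward function F_G(w, x), defined by well-founded recursion along the
   edge relation of G (G is acyclic since \<pi> maps it to the DAG B). *)
definition forward ::
  "('b, 'y, 'z::comm_monoid_add, 'w) pmod \<Rightarrow> ('g \<times> 'g) set \<Rightarrow> ('g \<Rightarrow> 'b) \<Rightarrow> ('g \<Rightarrow> 'c) \<Rightarrow>
   ('g \<times> 'g \<Rightarrow> 'w) \<Rightarrow> ('c \<Rightarrow> 'y) \<Rightarrow> 'g \<Rightarrow> 'y" where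
  "forward B E \<pi> c w x = wfrec E (\<lambda>f v.
     if \<pi> v \<in> IB B then x (c v)
     else sig B (\<pi> v) (\<lambda>a. if a \<in> parents (EB B) (\<pi> v)
        then (\<Sum>u\<in>{u\<in>parents E v. \<pi> u = a}. Mb B (\<pi> u, \<pi> v) (w (u, v)) (f u))
        else 0))"

definition lifted_morphism ::
  "('b, 'y, 'z, 'w) pmod \<Rightarrow>
   'g set \<Rightarrow> ('g \<times> 'g) set \<Rightarrow> ('g \<Rightarrow> 'b) \<Rightarrow> ('g \<Rightarrow> 'c) \<Rightarrow>
   'h set \<Rightarrow> ('h \<times> 'h) set \<Rightarrow> ('h \<Rightarrow> 'b) \<Rightarrow> ('h \<Rightarrow> 'c) \<Rightarrow> ('g \<Rightarrow> 'h) \<Rightarrow> bool" where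
  "lifted_morphism B VG EG \<pi>G cG VH EH \<pi>H cH \<phi> \<longleftrightarrow>
     fibration VG EG VH EH \<phi> \<and>
     (\<forall>v\<in>VG. \<pi>G v = \<pi>H (\<phi> v)) \<and>
     (\<forall>v\<in>VG. \<pi>G v \<in> IB B \<longrightarrow> cG v = cH (\<phi> v))"

end

theory Submission
  imports Defs
begin

text \<open>A fibration
  maps the parents of \<open>v\<close> carrying a given label \<open>a\<close> bijectively onto the parents of \<open>\<phi> v\<close>
  carrying \<open>a\<close>, and the weights of corresponding edges agree; so by well-founded induction
  the two recursions produce the same value at \<open>v\<close> and at \<open>\<phi> v\<close>.\<close>

lemma graph_hom_wf:
  assumes "graph_hom V E V' E' \<pi>" and "wf E'"
  shows "wf E"
proof (rule wf_subset)
  show "wf (inv_image E' \<pi>)" using \<open>wf E'\<close> by blast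
  show "E \<subseteq> inv_image E' \<pi>" using assms(1) unfolding graph_hom_def by auto
qed

lemma is_dag_wf:
  assumes "is_dag V E"
  shows "wf E"
proof (rule finite_acyclic_wf)
  show "finite E"
    using assms unfolding is_dag_def is_graph_def by (meson finite_SigmaI finite_subset)
  show "acyclic E" using assms unfolding is_dag_def by blast
qed

lemma lift_pmod_wf:
  assumes "perceptron_module B" and "lift_pmod B C p V E \<pi> c"
  shows "wf E"
proof (rule graph_hom_wf)
  show "graph_hom V E (VB B) (EB B) \<pi>" using assms(2) unfolding lift_pmod_def by blast
  show "wf (EB B)" using assms(1) is_dag_wf unfolding perceptron_module_def by blast
qed

lemma forward_unfold:
  assumes "wf E"
  shows "forward B E \<pi> c w x v =
    (if \<pi> v \<in> IB B then x (c v)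
     else sig B (\<pi> v) (\<lambda>a. if a \<in> parents (EB B) (\<pi> v)
        then (\<Sum>u\<in>{u\<in>parents E v. \<pi> u = a}. Mb B (\<pi> u, \<pi> v) (w (u, v)) (forward B E \<pi> c w x u))
        else 0))"
  unfolding forward_def
  by (subst wfrec[OF assms])
    (auto simp: cut_apply parents_def intro!: sum.cong arg_cong[where f = "sig B _"])

lemma lifted_morphism_bij_betw_labelled_parents:
  assumes "lifted_morphism B VG EG \<pi>G cG VH EH \<pi>H cH \<phi>" and "EG \<subseteq> VG \<times> VG" and "v \<in> VG"
  shows "bij_betw \<phi> {u\<in>parents EG v. \<pi>G u = a} {u\<in>parents EH (\<phi> v). \<pi>H u = a}"
proof (rule bij_betw_Collect)
  show "bij_betw \<phi> (parents EG v) (parents EH (\<phi> v))"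
    using assms(1,3) unfolding lifted_morphism_def fibration_def by blast
  show "\<pi>H (\<phi> u) = a \<longleftrightarrow> \<pi>G u = a" if "u \<in> parents EG v" for u
    using assms(1,2) that unfolding lifted_morphism_def parents_def by auto
qed

lemma forward_lifted_morphism:
  assumes "wf EG" and "wf EH" and "EG \<subseteq> VG \<times> VG"
    and morphism: "lifted_morphism B VG EG \<pi>G cG VH EH \<pi>H cH \<phi>"
    and weights: "\<forall>u v. (u, v) \<in> EG \<longrightarrow> wG (u, v) = wH (\<phi> u, \<phi> v)"
    and "v \<in> VG"
  shows "forward B EG \<pi>G cG wG x v = forward B EH \<pi>H cH wH x (\<phi> v)"
  using \<open>wf EG\<close> \<open>v \<in> VG\<close>
proof (induction v rule: wf_induct_rule)
  case (less v)
  let ?FG = "forward B EG \<pi>G cG wG x" and ?FH = "forward B EH \<pi>H cH wH x"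
  have same_label: "\<And>u. u \<in> VG \<Longrightarrow> \<pi>G u = \<pi>H (\<phi> u)"
    and same_input: "\<pi>G v \<in> IB B \<Longrightarrow> cG v = cH (\<phi> v)"
    using morphism \<open>v \<in> VG\<close> unfolding lifted_morphism_def by auto
  have sums_eq:
    "(\<Sum>u\<in>{u\<in>parents EG v. \<pi>G u = a}. Mb B (\<pi>G u, \<pi>G v) (wG (u, v)) (?FG u))
   = (\<Sum>u\<in>{u\<in>parents EH (\<phi> v). \<pi>H u = a}. Mb B (\<pi>H u, \<pi>H (\<phi> v)) (wH (u, \<phi> v)) (?FH u))"
    for a
  proof -
    have "bij_betw \<phi> {u\<in>parents EG v. \<pi>G u = a} {u\<in>parents EH (\<phi> v). \<pi>H u = a}"
      using morphism \<open>EG \<subseteq> VG \<times> VG\<close> \<open>v \<in> VG\<close> by (rule lifted_morphism_bij_betw_labelled_parents)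
    then have "(\<Sum>u\<in>{u\<in>parents EH (\<phi> v). \<pi>H u = a}. Mb B (\<pi>H u, \<pi>H (\<phi> v)) (wH (u, \<phi> v)) (?FH u))
      = (\<Sum>u\<in>{u\<in>parents EG v. \<pi>G u = a}.
           Mb B (\<pi>H (\<phi> u), \<pi>H (\<phi> v)) (wH (\<phi> u, \<phi> v)) (?FH (\<phi> u)))"
      by (rule sum.reindex_bij_betw[symmetric])
    also have "\<dots> = (\<Sum>u\<in>{u\<in>parents EG v. \<pi>G u = a}. Mb B (\<pi>G u, \<pi>G v) (wG (u, v)) (?FG u))"
    proof (rule sum.cong[OF refl])
      fix u assume "u \<in> {u\<in>parents EG v. \<pi>G u = a}"
      then have "(u, v) \<in> EG" and "u \<in> VG" using \<open>EG \<subseteq> VG \<times> VG\<close> by (auto simp: parents_def)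
      then show "Mb B (\<pi>H (\<phi> u), \<pi>H (\<phi> v)) (wH (\<phi> u, \<phi> v)) (?FH (\<phi> u))
          = Mb B (\<pi>G u, \<pi>G v) (wG (u, v)) (?FG u)"
        using less.IH weights same_label \<open>v \<in> VG\<close> by simp
    qed
    finally show ?thesis by simp
  qed
  note unfold_G = forward_unfold[OF \<open>wf EG\<close>, of _ _ _ _ _ v]
    and unfold_H = forward_unfold[OF \<open>wf EH\<close>, of _ _ _ _ _ "\<phi> v"]
  have label_v: "\<pi>H (\<phi> v) = \<pi>G v" using same_label \<open>v \<in> VG\<close> by simp
  show ?case
  proof (cases "\<pi>G v \<in> IB B")
    case True
    then show ?thesis using same_input by (simp add: unfold_G unfold_H label_v)
  next
    case False
    \<comment> \<open>With the full simpset, \<open>\<pi>G u\<close> would be rewritten to \<open>a\<close> inside the sums and \<open>sums_eq\<close> would no longer match.\<close>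
    then show ?thesis by (simp only: unfold_G unfold_H label_v sums_eq if_False)
  qed
qed

theorem proposition3:
  fixes B :: "('b, 'y::euclidean_space, 'z::euclidean_space, 'w::euclidean_space) pmod"
    and C :: "'c set" and p :: "'c \<Rightarrow> 'b"
    and VG :: "'g set" and EG :: "('g \<times> 'g) set" and \<pi>G :: "'g \<Rightarrow> 'b" and cG :: "'g \<Rightarrow> 'c"
    and VH :: "'h set" and EH :: "('h \<times> 'h) set" and \<pi>H :: "'h \<Rightarrow> 'b" and cH :: "'h \<Rightarrow> 'c"
    and \<phi> :: "'g \<Rightarrow> 'h"
    and wG :: "'g \<times> 'g \<Rightarrow> 'w" and wH :: "'h \<times> 'h \<Rightarrow> 'w" and x :: "'c \<Rightarrow> 'y"
  assumes "perceptron_module B"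
    and "finite C" and "\<forall>u\<in>C. p u \<in> IB B"
    and "lift_pmod B C p VG EG \<pi>G cG"
    and "lift_pmod B C p VH EH \<pi>H cH"
    and "lifted_morphism B VG EG \<pi>G cG VH EH \<pi>H cH \<phi>"
    and "wG \<in> param B EG \<pi>G" and "wH \<in> param B EH \<pi>H"
    and "\<forall>u v. (u, v) \<in> EG \<longrightarrow> wG (u, v) = wH (\<phi> u, \<phi> v)"
    and "\<forall>u\<in>C. x u \<in> Yb B (p u)"
  shows "\<forall>v\<in>VG. forward B EG \<pi>G cG wG x v = forward B EH \<pi>H cH wH x (\<phi> v)"
proof
  fix v assume "v \<in> VG"
  show "forward B EG \<pi>G cG wG x v = forward B EH \<pi>H cH wH x (\<phi> v)"
  proof (rule forward_lifted_morphism)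
    show "wf EG" using assms(1,4) by (rule lift_pmod_wf)
    show "wf EH" using assms(1,5) by (rule lift_pmod_wf)
    show "EG \<subseteq> VG \<times> VG" using assms(4) unfolding lift_pmod_def is_graph_def by blast
  qed (use assms(6,9) \<open>v \<in> VG\<close> in auto)
qed

end
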